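(* Let $(\Omega,\mu)$ be a measure space and $1<p<\infty$. Let $\mathcal U\subset\mathbb C$ be an open set, let $\Gamma\subset\mathcal U$ be a compact $C^1$-curve, and let $\varphi\colon\mathcal U\to B(L^p(\Omega))$ be an analytic function. Then there exists a constant $C\ge 0$ such that $$\Big\|\Big(\int_\Gamma |\varphi(\lambda)x|^2\,|d\lambda|\Big)^{1/2}\Big\|_p\le C\|x\|_p\qquad\text{for all }x\in L^p(\Omega).$$
   Context: $B(X)$ denotes the algebra of bounded operators on a Banach space $X$; $|d\lambda|$ is arc-length measure on $\Gamma$. *)

theory Defs
  imports "HOL-Analysis.Analysis"
begin

text \<open>Complex L^p space over a measure space M, represented by measurable
  representatives (elements equal a.e. are identified only implicitly through the norm).\<close>

definition Lp_set :: "real \<Rightarrow> 'a measure \<Rightarrow> ('a \<Rightarrow> complex) set" where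
  "Lp_set p M = {f. f \<in> borel_measurable M \<and> integrable M (\<lambda>w. norm (f w) powr p)}"

definition lp_norm :: "real \<Rightarrow> 'a measure \<Rightarrow> ('a \<Rightarrow> complex) \<Rightarrow> real" where
  "lp_norm p M f = (\<integral>w. norm (f w) powr p \<partial>M) powr (1 / p)"

definition bounded_op :: "real \<Rightarrow> 'a measure \<Rightarrow> (('a \<Rightarrow> complex) \<Rightarrow> ('a \<Rightarrow> complex)) \<Rightarrow> bool" where
  "bounded_op p M T \<longleftrightarrow>
     (\<forall>f\<in>Lp_set p M. T f \<in> Lp_set p M) \<and>
     (\<forall>f\<in>Lp_set p M. \<forall>g\<in>Lp_set p M. T (\<lambda>w. f w + g w) = (\<lambda>w. T f w + T g w)) \<and>
     (\<forall>f\<in>Lp_set p M. \<forall>c::complex. T (\<lambda>w. c * f w) = (\<lambda>w. c * T f w)) \<and>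
     (\<exists>K. \<forall>f\<in>Lp_set p M. lp_norm p M (T f) \<le> K * lp_norm p M f)"

definition op_norm :: "real \<Rightarrow> 'a measure \<Rightarrow> (('a \<Rightarrow> complex) \<Rightarrow> ('a \<Rightarrow> complex)) \<Rightarrow> real" where
  "op_norm p M T = Sup {lp_norm p M (T f) | f. f \<in> Lp_set p M \<and> lp_norm p M f \<le> 1}"

definition analytic_op_on ::
  "real \<Rightarrow> 'a measure \<Rightarrow> complex set \<Rightarrow> (complex \<Rightarrow> ('a \<Rightarrow> complex) \<Rightarrow> ('a \<Rightarrow> complex)) \<Rightarrow> bool" where
  "analytic_op_on p M U \<phi> \<longleftrightarrow>
     (\<forall>z\<in>U. bounded_op p M (\<phi> z)) \<and>
     (\<forall>z0\<in>U. \<exists>r>0. ball z0 r \<subseteq> U \<and>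
        (\<exists>A :: nat \<Rightarrow> ('a \<Rightarrow> complex) \<Rightarrow> ('a \<Rightarrow> complex).
           (\<forall>n. bounded_op p M (A n)) \<and>
           (\<forall>z\<in>ball z0 r.
              (\<lambda>N. op_norm p M (\<lambda>f w. \<phi> z f w - (\<Sum>n<N. (z - z0) ^ n * A n f w)))
                \<longlonglongrightarrow> 0)))"

text \<open>A compact C^1 curve, parametrised on [0,1]: continuously differentiable
  (one-sided derivatives at the endpoints).\<close>

definition C1_curve :: "(real \<Rightarrow> complex) \<Rightarrow> bool" where
  "C1_curve \<gamma> \<longleftrightarrow> (\<exists>D. (\<forall>t\<in>{0..1}. (\<gamma> has_vector_derivative D t) (at t within {0..1}))
                         \<and> continuous_on {0..1} D)"

end

theory Submission
  imports Defs
begin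

text \<open>
  Near a point $z_0$ of the curve, $\varphi(z)=\sum_n(z-z_0)^nA_n$ in operator norm on a disc
  of radius $r$, and the Cauchy estimate gives $(r/2)^n\|A_n\|\le B$. Hence for
  $|z-z_0|\le r/4$ the pointwise series $\sum_n(z-z_0)^nA_nx(w)$ is dominated by the majorant
  $G=\sum_n(r/4)^n|A_nx|\in L^p$ with $\|G\|_p\le2B\|x\|_p$, and it sums to $\varphi(z)x$
  a.e. So the orbit $t\mapsto\varphi(\gamma(t))x$ has, locally in $t$, a jointly measurable
  version $F$ with $|F(t,w)|\le|G(w)|$ (a dominated version). A Lebesgue number argument cuts
  $[0,1)$ into finitely many intervals, each mapped by $\gamma$ into such a disc, and the local
  versions are glued. Finally
  $\big(\int_0^1|F(t,w)|^2|\gamma'(t)|\,dt\big)^{1/2}\le\sqrt{\sup|\gamma'|}\,|G(w)|$.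
\<close>

subsection \<open>Elementary facts about the $L^p$ norm\<close>

lemma lp_norm_nonneg: "lp_norm p M f \<ge> 0"
  by (simp add: lp_norm_def)

lemma lp_norm_powr:
  assumes "f \<in> Lp_set p M" "p > 0"
  shows "lp_norm p M f powr p = (\<integral>w. norm (f w) powr p \<partial>M)"
proof -
  have "(\<integral>w. norm (f w) powr p \<partial>M) \<ge> 0" by (rule integral_nonneg_AE) auto
  thus ?thesis using assms by (simp add: lp_norm_def powr_powr)
qed

lemma lp_norm_le_of_integral:
  assumes "p > 0" "0 \<le> I" "(\<integral>w. norm (f w) powr p \<partial>M) \<le> I powr p"
  shows "lp_norm p M f \<le> I"
proof -
  have "lp_norm p M f \<le> (I powr p) powr (1/p)"
    unfolding lp_norm_def using assms
    by (intro powr_mono2) (auto intro: integral_nonneg_AE)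
  thus ?thesis using assms by (simp add: powr_powr)
qed

lemma Lp_of_nn_integral_bound:
  assumes p: "p > 0" and gm: "g \<in> borel_measurable M" and C: "C \<ge> 0"
    and bound: "(\<integral>\<^sup>+w. ennreal (cmod (g w) powr p) \<partial>M) \<le> ennreal (C powr p)"
  shows "g \<in> Lp_set p M" and "lp_norm p M g \<le> C"
proof -
  have [measurable]: "g \<in> borel_measurable M" by (rule gm)
  have "(\<integral>\<^sup>+w. ennreal (norm (cmod (g w) powr p)) \<partial>M) < \<infinity>"
    using le_less_trans[OF bound ennreal_less_top] by simp
  then have gi: "integrable M (\<lambda>w. cmod (g w) powr p)" by (intro integrableI_bounded) measurable
  then show "g \<in> Lp_set p M" using gm by (simp add: Lp_set_def)
  have "ennreal (\<integral>w. cmod (g w) powr p \<partial>M) \<le> ennreal (C powr p)"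
    using bound nn_integral_eq_integral[OF gi] by simp
  hence "(\<integral>w. cmod (g w) powr p \<partial>M) \<le> C powr p" by (simp add: ennreal_le_iff)
  thus "lp_norm p M g \<le> C" using p C by (intro lp_norm_le_of_integral) auto
qed

lemma Lp_dominated:
  assumes "f \<in> Lp_set p M" "g \<in> borel_measurable M" "p > 0"
    "AE w in M. norm (g w) \<le> norm (f w)"
  shows "g \<in> Lp_set p M" "lp_norm p M g \<le> lp_norm p M f"
proof -
  have fi: "integrable M (\<lambda>w. norm (f w) powr p)" using assms by (simp add: Lp_set_def)
  have le: "AE w in M. norm (g w) powr p \<le> norm (f w) powr p"
    using assms(4) by eventually_elim (auto intro!: powr_mono2 simp: assms(3) less_imp_le)
  have gi: "integrable M (\<lambda>w. norm (g w) powr p)"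
    by (rule Bochner_Integration.integrable_bound[OF fi]) (use assms(2) le in auto)
  thus "g \<in> Lp_set p M" using assms by (simp add: Lp_set_def)
  have "(\<integral>w. norm (g w) powr p \<partial>M) \<le> (\<integral>w. norm (f w) powr p \<partial>M)"
    by (rule integral_mono_AE[OF gi fi le])
  thus "lp_norm p M g \<le> lp_norm p M f" unfolding lp_norm_def
    by (intro powr_mono2) (auto intro: integral_nonneg_AE simp: assms(3) less_imp_le)
qed

lemma Lp_scale:
  assumes "f \<in> Lp_set p M" "p > 0"
  shows "(\<lambda>w. c * f w) \<in> Lp_set p M" "lp_norm p M (\<lambda>w. c * f w) = cmod c * lp_norm p M f"
proof -
  have e: "\<And>w. norm (c * f w) powr p = cmod c powr p * norm (f w) powr p"
    by (simp add: norm_mult powr_mult)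
  have fm[measurable]: "f \<in> borel_measurable M" using assms by (simp add: Lp_set_def)
  have "(\<lambda>w. c * f w) \<in> borel_measurable M" by measurable
  then show "(\<lambda>w. c * f w) \<in> Lp_set p M" using assms by (simp add: Lp_set_def e)
  have "lp_norm p M (\<lambda>w. c * f w) = (cmod c powr p * (\<integral>w. norm (f w) powr p \<partial>M)) powr (1/p)"
    unfolding lp_norm_def e by simp
  also have "\<dots> = (cmod c powr p) powr (1/p) * lp_norm p M f"
    unfolding lp_norm_def by (rule powr_mult; auto intro: integral_nonneg_AE)
  also have "\<dots> = cmod c * lp_norm p M f" using assms by (simp add: powr_powr)
  finally show "lp_norm p M (\<lambda>w. c * f w) = cmod c * lp_norm p M f" .
qed

text \<open>Convexity of $u\mapsto u^p$ on $[0,\infty)$; the library only states it on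
  $(0,\infty)$, the boundary cases follow from $a^p\le a$ for $a\in[0,1]$.\<close>
lemma powr_convex_combination:
  fixes u v l p :: real
  assumes "0 \<le> u" "0 \<le> v" "0 \<le> l" "l \<le> 1" "p \<ge> 1"
  shows "(l * u + (1 - l) * v) powr p \<le> l * u powr p + (1 - l) * v powr p"
proof -
  have shrink: "(a * y) powr p \<le> a * y powr p" if "0 \<le> a" "a \<le> 1" "0 \<le> y" for a y :: real
  proof -
    have "a powr p \<le> a" using that assms(5) by (metis powr_one powr_mono')
    hence "a powr p * y powr p \<le> a * y powr p" by (intro mult_right_mono) auto
    thus ?thesis using that by (simp add: powr_mult)
  qed
  consider "u > 0" "v > 0" | "u = 0" | "v = 0" using assms by linarith
  then show ?thesis
  proof cases
    case 1
    from convex_onD[OF powr_convex[OF assms(5)], of l v u] 1 assms show ?thesis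
      by (simp add: algebra_simps)
  qed (use shrink[of "1 - l" v] shrink[of l u] assms in auto)
qed


text \<open>Closure of $L^p$ under addition (via $|f+g|^p\le 2^p(|f|^p+|g|^p)$).\<close>
lemma Lp_add:
  assumes "f \<in> Lp_set p M" "g \<in> Lp_set p M" "p > 0"
  shows "(\<lambda>w. f w + g w) \<in> Lp_set p M"
proof -
  have m: "f \<in> borel_measurable M" "g \<in> borel_measurable M" using assms by (auto simp: Lp_set_def)
  have i: "integrable M (\<lambda>w. 2 powr p * (norm (f w) powr p + norm (g w) powr p))"
    using assms by (auto simp: Lp_set_def)
  have pointwise: "norm (f w + g w) powr p \<le> 2 powr p * (norm (f w) powr p + norm (g w) powr p)" for w
  proof -
    let ?a = "norm (f w)" and ?b = "norm (g w)"
    have "norm (f w + g w) \<le> 2 * max ?a ?b" using norm_triangle_ineq[of "f w" "g w"] by linarith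
    hence "norm (f w + g w) powr p \<le> (2 * max ?a ?b) powr p" using assms by (intro powr_mono2) auto
    also have "\<dots> = 2 powr p * max ?a ?b powr p" by (simp add: powr_mult)
    also have "\<dots> \<le> 2 powr p * (?a powr p + ?b powr p)" by (intro mult_left_mono) (auto simp: max_def)
    finally show ?thesis .
  qed
  have "integrable M (\<lambda>w. norm (f w + g w) powr p)"
    by (rule Bochner_Integration.integrable_bound[OF i]) (use m pointwise in auto)
  thus ?thesis using m by (auto simp: Lp_set_def)
qed

text \<open>For $a>\|f\|$, $b>\|g\|$ convexity of $u\mapsto u^p$ gives
  $|f+g|^p\le(a+b)^p\big(\tfrac{a}{a+b}(|f|/a)^p+\tfrac{b}{a+b}(|g|/b)^p\big)$; integrate and
  let $a\to\|f\|$, $b\to\|g\|$.\<close>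
lemma Lp_minkowski:
  assumes f: "f \<in> Lp_set p M" and g: "g \<in> Lp_set p M" and p: "p \<ge> 1"
  shows "lp_norm p M (\<lambda>w. f w + g w) \<le> lp_norm p M f + lp_norm p M g"
proof (rule field_le_epsilon)
  fix e :: real assume e: "e > 0"
  have p0: "p > 0" using p by auto
  let ?nf = "lp_norm p M f" and ?ng = "lp_norm p M g"
  define a where "a = ?nf + e / 2"
  define b where "b = ?ng + e / 2"
  have ab: "a > 0" "b > 0" "?nf \<le> a" "?ng \<le> b"
    using e lp_norm_nonneg[of p M f] lp_norm_nonneg[of p M g] by (auto simp: a_def b_def)
  define l where "l = a / (a + b)"
  have l: "0 \<le> l" "l \<le> 1" "1 - l = b / (a + b)" using ab by (auto simp: l_def field_simps)
  have fi: "integrable M (\<lambda>w. norm (f w) powr p)" and gi: "integrable M (\<lambda>w. norm (g w) powr p)"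
    using f g by (auto simp: Lp_set_def)
  have pointwise: "norm (f w + g w) powr p \<le>
      (a + b) powr p * (l / a powr p * norm (f w) powr p + (1 - l) / b powr p * norm (g w) powr p)" for w
  proof -
    have "norm (f w + g w) powr p \<le> (norm (f w) + norm (g w)) powr p"
      using p0 by (intro powr_mono2) (auto intro: norm_triangle_ineq)
    also have "norm (f w) + norm (g w) = (a + b) * (l * (norm (f w) / a) + (1 - l) * (norm (g w) / b))"
    proof -
      have fpart: "(a + b) * (l * (norm (f w) / a)) = norm (f w)" using ab by (simp add: l_def)
      have gpart: "(a + b) * ((1 - l) * (norm (g w) / b)) = norm (g w)" using ab by (simp add: l(3))
      show ?thesis by (simp only: distrib_left fpart gpart)
    qed
    also have "\<dots> powr p = (a + b) powr p * (l * (norm (f w) / a) + (1 - l) * (norm (g w) / b)) powr p"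
      using ab l by (simp add: powr_mult)
    also have "\<dots> \<le> (a + b) powr p * (l * (norm (f w) / a) powr p + (1 - l) * (norm (g w) / b) powr p)"
      using ab l p by (intro mult_left_mono powr_convex_combination) auto
    finally show ?thesis using ab by (simp add: powr_divide)
  qed
  have "(\<integral>w. norm (f w + g w) powr p \<partial>M) \<le>
      (\<integral>w. (a + b) powr p * (l / a powr p * norm (f w) powr p + (1 - l) / b powr p * norm (g w) powr p) \<partial>M)"
    using Lp_add[OF f g p0] fi gi by (intro integral_mono pointwise) (auto simp: Lp_set_def)
  also have "\<dots> = (a + b) powr p * (l / a powr p * ?nf powr p + (1 - l) / b powr p * ?ng powr p)"
    using fi gi by (simp add: lp_norm_powr[OF f p0] lp_norm_powr[OF g p0])
  also have "\<dots> \<le> (a + b) powr p * (l / a powr p * a powr p + (1 - l) / b powr p * b powr p)"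
    using ab l p0 lp_norm_nonneg[of p M f] lp_norm_nonneg[of p M g]
    by (intro mult_left_mono add_mono powr_mono2 divide_nonneg_nonneg) auto
  also have "\<dots> = (a + b) powr p" using ab by simp
  finally have "lp_norm p M (\<lambda>w. f w + g w) \<le> a + b"
    using ab p0 by (intro lp_norm_le_of_integral) auto
  thus "lp_norm p M (\<lambda>w. f w + g w) \<le> ?nf + ?ng + e" by (simp add: a_def b_def)
qed

lemma Lp_zero: "(\<lambda>w. 0) \<in> Lp_set p M" "lp_norm p M (\<lambda>w. 0) = 0"
  by (auto simp: Lp_set_def lp_norm_def)

lemma Lp_sum:
  assumes "finite S" "\<And>i. i \<in> S \<Longrightarrow> f i \<in> Lp_set p M" "p \<ge> 1"
  shows "(\<lambda>w. \<Sum>i\<in>S. f i w) \<in> Lp_set p M"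
    and "lp_norm p M (\<lambda>w. \<Sum>i\<in>S. f i w) \<le> (\<Sum>i\<in>S. lp_norm p M (f i))"
proof -
  have "(\<lambda>w. \<Sum>i\<in>S. f i w) \<in> Lp_set p M \<and> lp_norm p M (\<lambda>w. \<Sum>i\<in>S. f i w) \<le> (\<Sum>i\<in>S. lp_norm p M (f i))"
    using assms
  proof (induction S rule: finite_induct)
    case empty
    then show ?case using Lp_zero[of p M] by simp
  next
    case (insert i S)
    then have fi: "f i \<in> Lp_set p M" and IH: "(\<lambda>w. \<Sum>i\<in>S. f i w) \<in> Lp_set p M"
      "lp_norm p M (\<lambda>w. \<Sum>i\<in>S. f i w) \<le> (\<Sum>i\<in>S. lp_norm p M (f i))" by auto
    have "lp_norm p M (\<lambda>w. f i w + (\<Sum>i\<in>S. f i w)) \<le> lp_norm p M (f i) + (\<Sum>i\<in>S. lp_norm p M (f i))"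
      using Lp_minkowski[OF fi IH(1)] IH(2) insert.prems by auto
    then show ?case using Lp_add[OF fi IH(1)] insert by simp
  qed
  then show "(\<lambda>w. \<Sum>i\<in>S. f i w) \<in> Lp_set p M" "lp_norm p M (\<lambda>w. \<Sum>i\<in>S. f i w) \<le> (\<Sum>i\<in>S. lp_norm p M (f i))"
    by auto
qed

lemma Lp_diff:
  assumes "f \<in> Lp_set p M" "g \<in> Lp_set p M" "p \<ge> 1"
  shows "(\<lambda>w. f w - g w) \<in> Lp_set p M" "lp_norm p M (\<lambda>w. f w - g w) \<le> lp_norm p M f + lp_norm p M g"
proof -
  have g': "(\<lambda>w. (-1) * g w) \<in> Lp_set p M" "lp_norm p M (\<lambda>w. (-1) * g w) = lp_norm p M g"
    using Lp_scale[OF assms(2), of "-1"] assms by auto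
  show "(\<lambda>w. f w - g w) \<in> Lp_set p M" using Lp_add[OF assms(1) g'(1)] assms by simp
  show "lp_norm p M (\<lambda>w. f w - g w) \<le> lp_norm p M f + lp_norm p M g"
    using Lp_minkowski[OF assms(1) g'(1)] g'(2) assms by simp
qed

lemma Lp_sum_abs:
  assumes J: "finite J" and f: "\<And>j. j \<in> J \<Longrightarrow> f j \<in> Lp_set p M" and p: "p \<ge> 1"
  shows "(\<lambda>w. complex_of_real (\<Sum>j\<in>J. cmod (f j w))) \<in> Lp_set p M"
    and "lp_norm p M (\<lambda>w. complex_of_real (\<Sum>j\<in>J. cmod (f j w))) \<le> (\<Sum>j\<in>J. lp_norm p M (f j))"
proof -
  have abs: "(\<lambda>w. complex_of_real (cmod (f j w))) \<in> Lp_set p M"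
    "lp_norm p M (\<lambda>w. complex_of_real (cmod (f j w))) \<le> lp_norm p M (f j)" if "j \<in> J" for j
  proof -
    have [measurable]: "f j \<in> borel_measurable M" using f[OF that] by (simp add: Lp_set_def)
    have m: "(\<lambda>w. complex_of_real (cmod (f j w))) \<in> borel_measurable M" by measurable
    have "AE w in M. cmod (complex_of_real (cmod (f j w))) \<le> cmod (f j w)" by simp
    from Lp_dominated[OF f[OF that] m _ this] p
    show "(\<lambda>w. complex_of_real (cmod (f j w))) \<in> Lp_set p M"
      "lp_norm p M (\<lambda>w. complex_of_real (cmod (f j w))) \<le> lp_norm p M (f j)" by auto
  qed
  note sum = Lp_sum[where f = "\<lambda>j w. complex_of_real (cmod (f j w))", OF J abs(1) p]
  show "(\<lambda>w. complex_of_real (\<Sum>j\<in>J. cmod (f j w))) \<in> Lp_set p M" using sum(1) by simp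
  have "(\<Sum>j\<in>J. lp_norm p M (\<lambda>w. complex_of_real (cmod (f j w)))) \<le> (\<Sum>j\<in>J. lp_norm p M (f j))"
    by (rule sum_mono) (rule abs(2))
  from order_trans[OF sum(2) this]
  show "lp_norm p M (\<lambda>w. complex_of_real (\<Sum>j\<in>J. cmod (f j w))) \<le> (\<Sum>j\<in>J. lp_norm p M (f j))" by simp
qed

lemma Lp_geometric_partial_sums:
  assumes p: "p \<ge> 1" and q: "0 \<le> q" "q < 1" and f: "\<And>n. f n \<in> Lp_set p M"
    and f_bound: "\<And>n. lp_norm p M (f n) \<le> q ^ n * K" and K: "K \<ge> 0"
  shows "(\<lambda>w. \<Sum>n<N. f n w) \<in> Lp_set p M" and "lp_norm p M (\<lambda>w. \<Sum>n<N. f n w) \<le> K / (1 - q)"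
proof -
  show "(\<lambda>w. \<Sum>n<N. f n w) \<in> Lp_set p M" by (rule Lp_sum(1)[OF finite_lessThan f p])
  have geom: "(\<Sum>n<N. q ^ n) \<le> 1 / (1 - q)"
    using sum_le_suminf[OF summable_geometric[of q], of "{..<N}"] suminf_geometric[of q] q by simp
  have "lp_norm p M (\<lambda>w. \<Sum>n<N. f n w) \<le> (\<Sum>n<N. lp_norm p M (f n))"
    by (rule Lp_sum(2)[OF finite_lessThan f p])
  also have "\<dots> \<le> (\<Sum>n<N. q ^ n) * K" unfolding sum_distrib_right by (intro sum_mono f_bound)
  also have "\<dots> \<le> 1 / (1 - q) * K" using geom K by (rule mult_right_mono)
  finally show "lp_norm p M (\<lambda>w. \<Sum>n<N. f n w) \<le> K / (1 - q)" by simp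
qed

lemma Lp_fatou:
  assumes p: "p > 0" and f: "\<And>N. f N \<in> Lp_set p M" and gm: "g \<in> borel_measurable M"
    and lim: "AE w in M. (\<lambda>N. f N w) \<longlonglongrightarrow> g w"
    and bound: "eventually (\<lambda>N. lp_norm p M (f N) \<le> C) sequentially" and C: "C \<ge> 0"
  shows "g \<in> Lp_set p M" and "lp_norm p M g \<le> C"
proof -
  have [measurable]: "f N \<in> borel_measurable M" for N using f by (simp add: Lp_set_def)
  have int_eq: "(\<integral>\<^sup>+w. ennreal (cmod (f N w) powr p) \<partial>M) = ennreal (lp_norm p M (f N) powr p)" for N
    using f[of N] lp_norm_powr[OF f p] by (subst nn_integral_eq_integral) (auto simp: Lp_set_def)
  have "(\<integral>\<^sup>+w. ennreal (cmod (g w) powr p) \<partial>M) \<le> (\<integral>\<^sup>+w. liminf (\<lambda>N. ennreal (cmod (f N w) powr p)) \<partial>M)"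
  proof (rule nn_integral_mono_AE)
    show "AE w in M. ennreal (cmod (g w) powr p) \<le> liminf (\<lambda>N. ennreal (cmod (f N w) powr p))"
      using lim
    proof eventually_elim
      case (elim w)
      have "(\<lambda>N. ennreal (cmod (f N w) powr p)) \<longlonglongrightarrow> ennreal (cmod (g w) powr p)"
        using elim p by (intro tendsto_ennrealI tendsto_powr' tendsto_norm) auto
      from lim_imp_Liminf[OF trivial_limit_sequentially this] show ?case by simp
    qed
  qed
  also have "\<dots> \<le> liminf (\<lambda>N. \<integral>\<^sup>+w. ennreal (cmod (f N w) powr p) \<partial>M)"
    by (rule nn_integral_liminf) measurable
  also have "\<dots> \<le> ennreal (C powr p)" unfolding int_eq
  proof (rule Liminf_le)
    show "\<forall>\<^sub>F N in sequentially. ennreal (lp_norm p M (f N) powr p) \<le> ennreal (C powr p)"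
      using bound by eventually_elim (use p in \<open>auto intro!: ennreal_leI powr_mono2 simp: lp_norm_nonneg\<close>)
  qed simp
  finally show "g \<in> Lp_set p M" "lp_norm p M g \<le> C" using Lp_of_nn_integral_bound[OF p gm C] by auto
qed

lemma Lp_limit_ae_zero:
  assumes p: "p > 0" and d: "\<And>N. d N \<in> Lp_set p M"
    and norm_lim: "(\<lambda>N. lp_norm p M (d N)) \<longlonglongrightarrow> 0"
    and pointwise: "AE w in M. (\<lambda>N. d N w) \<longlonglongrightarrow> l w" and lm: "l \<in> borel_measurable M"
  shows "AE w in M. l w = 0"
proof -
  have eventually_small: "eventually (\<lambda>N. lp_norm p M (d N) \<le> e) sequentially" if "e > 0" for e
    using order_tendstoD(2)[OF norm_lim that] by eventually_elim simp
  have l: "l \<in> Lp_set p M" by (rule Lp_fatou(1)[OF p d lm pointwise eventually_small[of 1]]) simp_all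
  have l_small: "lp_norm p M l \<le> e" if "e > 0" for e
    by (rule Lp_fatou(2)[OF p d lm pointwise eventually_small[OF that]]) (use that in simp)
  have "lp_norm p M l \<le> 0" by (rule field_le_epsilon) (simp add: l_small)
  then have "lp_norm p M l powr p = 0" using lp_norm_nonneg[of p M l] by simp
  then have "(\<integral>w. cmod (l w) powr p \<partial>M) = 0" by (simp add: lp_norm_powr[OF l p])
  moreover have "integrable M (\<lambda>w. cmod (l w) powr p)" using l by (simp add: Lp_set_def)
  ultimately have "AE w in M. cmod (l w) powr p = 0" by (simp add: integral_nonneg_eq_0_iff_AE)
  then show ?thesis by eventually_elim simp
qed

text \<open>A series of nonnegative measurable functions whose partial sums are bounded in $L^p$
  converges a.e.: by monotone convergence $\sup_N P_N^p$ has finite integral, where $P_N$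
  are the partial sums, so it is finite a.e.\<close>
lemma Lp_bounded_series_ae_summable:
  fixes a :: "nat \<Rightarrow> 'a \<Rightarrow> real"
  assumes p: "p > 0" and am[measurable]: "\<And>n. a n \<in> borel_measurable M" and a0: "\<And>n w. a n w \<ge> 0"
    and partial: "\<And>N. (\<lambda>w. complex_of_real (\<Sum>n<N. a n w)) \<in> Lp_set p M"
    and partial_bound: "\<And>N. lp_norm p M (\<lambda>w. complex_of_real (\<Sum>n<N. a n w)) \<le> C"
  obtains H where "H \<in> sets M" "AE w in M. w \<in> H" "\<And>w. w \<in> H \<Longrightarrow> summable (\<lambda>n. a n w)"
proof -
  define P where "P N w = (\<Sum>n<N. a n w)" for N w
  have P0: "P N w \<ge> 0" for N w unfolding P_def using a0 by (intro sum_nonneg) auto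
  have Pm[measurable]: "P N \<in> borel_measurable M" for N unfolding P_def by measurable
  have Pmono: "P N w \<le> P N' w" if "N \<le> N'" for N N' w
    unfolding P_def using that a0 by (intro sum_mono2) auto
  have partialP: "(\<lambda>w. complex_of_real (P N w)) \<in> Lp_set p M"
    "lp_norm p M (\<lambda>w. complex_of_real (P N w)) \<le> C" for N
    using partial partial_bound by (simp_all add: P_def)
  have intP: "(\<integral>\<^sup>+w. ennreal (P N w powr p) \<partial>M) \<le> ennreal (C powr p)" for N
  proof -
    have "(\<integral>\<^sup>+w. ennreal (P N w powr p) \<partial>M) = ennreal (\<integral>w. P N w powr p \<partial>M)"
      using partialP(1)[of N] P0 by (intro nn_integral_eq_integral) (auto simp: Lp_set_def)
    also have "(\<integral>w. P N w powr p \<partial>M) = lp_norm p M (\<lambda>w. complex_of_real (P N w)) powr p"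
      using lp_norm_powr[OF partialP(1)[of N] p] P0 by simp
    also have "\<dots> \<le> C powr p"
      using partialP(2)[of N] p by (intro powr_mono2) (auto simp: lp_norm_nonneg)
    finally show ?thesis by (simp add: ennreal_leI)
  qed
  define Q where "Q w = (SUP N. ennreal (P N w powr p))" for w
  have "(\<integral>\<^sup>+w. Q w \<partial>M) = (SUP N. \<integral>\<^sup>+w. ennreal (P N w powr p) \<partial>M)"
    unfolding Q_def
    by (rule nn_integral_monotone_convergence_SUP)
      (auto simp: incseq_def le_fun_def intro!: ennreal_leI powr_mono2 Pmono P0 less_imp_le[OF p])
  also have "\<dots> \<le> ennreal (C powr p)" by (rule SUP_least) (rule intP)
  finally have intQ: "(\<integral>\<^sup>+w. Q w \<partial>M) \<le> ennreal (C powr p)" .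
  define H where "H = {w \<in> space M. Q w \<noteq> \<infinity>}"
  have Hs: "H \<in> sets M" unfolding H_def Q_def by measurable
  have "AE w in M. Q w \<noteq> \<infinity>"
    using intQ by (intro nn_integral_PInf_AE) (auto simp: Q_def top_unique)
  then have AEH: "AE w in M. w \<in> H" using AE_space by eventually_elim (simp add: H_def)
  text \<open>Where $Q$ is finite the partial sums are bounded by $Q^{1/p}$.\<close>
  have summ: "summable (\<lambda>n. a n w)" if "w \<in> H" for w
  proof -
    have "P N w powr p \<le> enn2real (Q w)" for N
    proof -
      have "ennreal (P N w powr p) \<le> Q w" unfolding Q_def by (rule SUP_upper) auto
      from enn2real_mono[OF this] that show ?thesis by (simp add: H_def top.not_eq_extremum)
    qed
    hence "P N w \<le> enn2real (Q w) powr (1/p)" for N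
      using powr_mono2[of "1/p" "P N w powr p" "enn2real (Q w)"] P0[of N w] p by (simp add: powr_powr)
    thus ?thesis using a0 by (intro summableI_nonneg_bounded) (auto simp: P_def)
  qed
  show ?thesis by (rule that[OF Hs AEH summ])
qed

text \<open>Monotone convergence in $L^p$: moreover the sum of such a series lies in $L^p$ with the
  same bound, by Fatou's lemma applied to the (truncated) partial sums.\<close>
lemma Lp_monotone_series:
  fixes a :: "nat \<Rightarrow> 'a \<Rightarrow> real"
  assumes p: "p > 0" and am[measurable]: "\<And>n. a n \<in> borel_measurable M" and a0: "\<And>n w. a n w \<ge> 0"
    and partial: "\<And>N. (\<lambda>w. complex_of_real (\<Sum>n<N. a n w)) \<in> Lp_set p M"
    and partial_bound: "\<And>N. lp_norm p M (\<lambda>w. complex_of_real (\<Sum>n<N. a n w)) \<le> C" and C: "C \<ge> 0"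
  obtains H where "H \<in> sets M" "AE w in M. w \<in> H" "\<And>w. w \<in> H \<Longrightarrow> summable (\<lambda>n. a n w)"
    "(\<lambda>w. complex_of_real (indicator H w * (\<Sum>n. a n w))) \<in> Lp_set p M"
    "lp_norm p M (\<lambda>w. complex_of_real (indicator H w * (\<Sum>n. a n w))) \<le> C"
proof -
  obtain H where Hs: "H \<in> sets M" and AEH: "AE w in M. w \<in> H" and summ: "\<And>w. w \<in> H \<Longrightarrow> summable (\<lambda>n. a n w)"
    using Lp_bounded_series_ae_summable[OF p am a0 partial partial_bound] by blast
  define P where "P N w = (\<Sum>n<N. a n w)" for N w
  have P0: "P N w \<ge> 0" for N w unfolding P_def using a0 by (intro sum_nonneg) auto
  have [measurable]: "P N \<in> borel_measurable M" for N unfolding P_def by measurable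
  define G where "G w = indicator H w * (\<Sum>n. a n w)" for w
  have P_lim: "(\<lambda>N. indicator H w * P N w) \<longlonglongrightarrow> G w" for w
    unfolding G_def P_def by (cases "w \<in> H") (auto intro: tendsto_mult_left summable_LIMSEQ summ)
  have Gm: "G \<in> borel_measurable M"
    by (rule borel_measurable_LIMSEQ_metric[OF _ P_lim]) (use Hs in measurable)
  have trunc: "(\<lambda>w. complex_of_real (indicator H w * P N w)) \<in> Lp_set p M"
    "lp_norm p M (\<lambda>w. complex_of_real (indicator H w * P N w)) \<le> C" for N
  proof -
    have m: "(\<lambda>w. complex_of_real (indicator H w * P N w)) \<in> borel_measurable M" using Hs by measurable
    have "AE w in M. cmod (complex_of_real (indicator H w * P N w)) \<le> cmod (complex_of_real (P N w))"
      using P0 by (simp add: indicator_def)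
    from Lp_dominated[OF partial[of N, folded P_def] m p this] partial_bound[of N, folded P_def]
    show "(\<lambda>w. complex_of_real (indicator H w * P N w)) \<in> Lp_set p M"
      "lp_norm p M (\<lambda>w. complex_of_real (indicator H w * P N w)) \<le> C" by auto
  qed
  have Gcm: "(\<lambda>w. complex_of_real (G w)) \<in> borel_measurable M" using Gm by measurable
  have G_lim: "AE w in M. (\<lambda>N. complex_of_real (indicator H w * P N w)) \<longlonglongrightarrow> complex_of_real (G w)"
    using P_lim by (intro AE_I2 tendsto_of_real)
  have "eventually (\<lambda>N. lp_norm p M (\<lambda>w. complex_of_real (indicator H w * P N w)) \<le> C) sequentially"
    using trunc(2) by simp
  note G = Lp_fatou[where f = "\<lambda>N w. complex_of_real (indicator H w * P N w)", OF p trunc(1) Gcm G_lim this C]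
  show ?thesis by (rule that[OF Hs AEH summ G[unfolded G_def]])
qed

subsection \<open>Bounded operators\<close>

lemma bounded_opD:
  assumes "bounded_op p M T" "f \<in> Lp_set p M"
  shows "T f \<in> Lp_set p M"
    and "g \<in> Lp_set p M \<Longrightarrow> T (\<lambda>w. f w + g w) = (\<lambda>w. T f w + T g w)"
    and "T (\<lambda>w. c * f w) = (\<lambda>w. c * T f w)"
  using assms unfolding bounded_op_def by auto

lemma bounded_op_zero: "bounded_op p M (\<lambda>f w. 0)"
  unfolding bounded_op_def by (auto simp: Lp_zero intro: exI[of _ 0])

lemma bounded_op_add:
  assumes p: "p \<ge> 1" and S: "bounded_op p M S" and T: "bounded_op p M T"
  shows "bounded_op p M (\<lambda>f w. S f w + T f w)"
proof -
  obtain KS where KS: "\<forall>f\<in>Lp_set p M. lp_norm p M (S f) \<le> KS * lp_norm p M f"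
    using S unfolding bounded_op_def by blast
  obtain KT where KT: "\<forall>f\<in>Lp_set p M. lp_norm p M (T f) \<le> KT * lp_norm p M f"
    using T unfolding bounded_op_def by blast
  have norm: "lp_norm p M (\<lambda>w. S f w + T f w) \<le> (KS + KT) * lp_norm p M f" if f: "f \<in> Lp_set p M" for f
  proof -
    have "lp_norm p M (\<lambda>w. S f w + T f w) \<le> lp_norm p M (S f) + lp_norm p M (T f)"
      using p by (intro Lp_minkowski bounded_opD(1)[OF S f] bounded_opD(1)[OF T f])
    also have "\<dots> \<le> (KS + KT) * lp_norm p M f" using KS KT f by (simp add: distrib_right add_mono)
    finally show ?thesis .
  qed
  show ?thesis unfolding bounded_op_def
  proof (intro conjI ballI allI)
    fix f assume f: "f \<in> Lp_set p M"
    show "(\<lambda>w. S f w + T f w) \<in> Lp_set p M"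
      using p by (intro Lp_add bounded_opD(1)[OF S f] bounded_opD(1)[OF T f]) auto
    fix c :: complex
    show "(\<lambda>w. S (\<lambda>w. c * f w) w + T (\<lambda>w. c * f w) w) = (\<lambda>w. c * (S f w + T f w))"
      unfolding bounded_opD(3)[OF S f] bounded_opD(3)[OF T f] by (simp add: algebra_simps)
  next
    fix f g assume f: "f \<in> Lp_set p M" and g: "g \<in> Lp_set p M"
    show "(\<lambda>w. S (\<lambda>w. f w + g w) w + T (\<lambda>w. f w + g w) w) = (\<lambda>w. S f w + T f w + (S g w + T g w))"
      unfolding bounded_opD(2)[OF S f g] bounded_opD(2)[OF T f g] by (simp add: algebra_simps)
  next
    show "\<exists>K. \<forall>f\<in>Lp_set p M. lp_norm p M (\<lambda>w. S f w + T f w) \<le> K * lp_norm p M f"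
      using norm by blast
  qed
qed

lemma bounded_op_scale:
  assumes p: "p > 0" and T: "bounded_op p M T"
  shows "bounded_op p M (\<lambda>f w. c * T f w)"
proof -
  obtain K where K: "\<forall>f\<in>Lp_set p M. lp_norm p M (T f) \<le> K * lp_norm p M f"
    using T unfolding bounded_op_def by blast
  have norm: "lp_norm p M (\<lambda>w. c * T f w) \<le> (cmod c * K) * lp_norm p M f" if f: "f \<in> Lp_set p M" for f
    using Lp_scale(2)[OF bounded_opD(1)[OF T f] p, of c] K f
    by (simp add: mult.assoc mult_left_mono)
  show ?thesis unfolding bounded_op_def
  proof (intro conjI ballI allI)
    fix f assume f: "f \<in> Lp_set p M"
    show "(\<lambda>w. c * T f w) \<in> Lp_set p M" by (rule Lp_scale(1)[OF bounded_opD(1)[OF T f] p])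
    fix d :: complex
    show "(\<lambda>w. c * T (\<lambda>w. d * f w) w) = (\<lambda>w. d * (c * T f w))"
      unfolding bounded_opD(3)[OF T f] by (simp add: algebra_simps)
  next
    fix f g assume f: "f \<in> Lp_set p M" and g: "g \<in> Lp_set p M"
    show "(\<lambda>w. c * T (\<lambda>w. f w + g w) w) = (\<lambda>w. c * T f w + c * T g w)"
      unfolding bounded_opD(2)[OF T f g] by (simp add: algebra_simps)
  next
    show "\<exists>K. \<forall>f\<in>Lp_set p M. lp_norm p M (\<lambda>w. c * T f w) \<le> K * lp_norm p M f"
      using norm by blast
  qed
qed

lemma bounded_op_sum:
  assumes "finite S" "\<And>i. i \<in> S \<Longrightarrow> bounded_op p M (T i)" "p \<ge> 1"
  shows "bounded_op p M (\<lambda>f w. \<Sum>i\<in>S. T i f w)"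
  using assms by (induction S rule: finite_induct) (auto simp: bounded_op_zero intro!: bounded_op_add)

lemma op_norm_bound:
  assumes p: "p > 0" and T: "bounded_op p M T" and f: "f \<in> Lp_set p M"
  shows "lp_norm p M (T f) \<le> op_norm p M T * lp_norm p M f"
proof -
  obtain K where K: "\<forall>f\<in>Lp_set p M. lp_norm p M (T f) \<le> K * lp_norm p M f"
    using T unfolding bounded_op_def by blast
  show ?thesis
  proof (cases "lp_norm p M f = 0")
    case True
    have "lp_norm p M (T f) \<le> K * lp_norm p M f" using K f by blast
    then show ?thesis using True lp_norm_nonneg[of p M "T f"] by simp
  next
    case False
    define s where "s = lp_norm p M f"
    have s: "s > 0" using False lp_norm_nonneg[of p M f] by (simp add: s_def)
    text \<open>The normalised vector $f/s$ is admissible in the supremum defining the operator norm.\<close>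
    define g where "g = (\<lambda>w. complex_of_real (1/s) * f w)"
    have g: "g \<in> Lp_set p M" "lp_norm p M g = 1"
      using Lp_scale[OF f p, of "complex_of_real (1/s)"] s by (auto simp: g_def s_def norm_divide)
    have "T g = (\<lambda>w. complex_of_real (1/s) * T f w)" unfolding g_def by (rule bounded_opD(3)[OF T f])
    then have Tg: "lp_norm p M (T g) = (1/s) * lp_norm p M (T f)"
      using Lp_scale(2)[OF bounded_opD(1)[OF T f] p, of "complex_of_real (1/s)"] s by (simp add: norm_divide)
    have "bdd_above {lp_norm p M (T f) | f. f \<in> Lp_set p M \<and> lp_norm p M f \<le> 1}"
    proof (rule bdd_aboveI[where M = "max K 0"])
      fix y assume "y \<in> {lp_norm p M (T f) | f. f \<in> Lp_set p M \<and> lp_norm p M f \<le> 1}"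
      then obtain h where h: "y = lp_norm p M (T h)" "h \<in> Lp_set p M" "lp_norm p M h \<le> 1" by auto
      have "K * lp_norm p M h \<le> max K 0 * lp_norm p M h"
        using lp_norm_nonneg[of p M h] by (intro mult_right_mono) auto
      also have "\<dots> \<le> max K 0" using h(3) by (intro mult_left_le) auto
      finally have "K * lp_norm p M h \<le> max K 0" .
      thus "y \<le> max K 0" using K h by force
    qed
    then have "lp_norm p M (T g) \<le> op_norm p M T"
      unfolding op_norm_def by (rule cSup_upper[rotated]) (use g in auto)
    thus ?thesis using s Tg by (simp add: s_def field_simps)
  qed
qed

subsection \<open>Local power series expansions\<close>

definition remainder_op ::
  "(complex \<Rightarrow> ('a \<Rightarrow> complex) \<Rightarrow> ('a \<Rightarrow> complex)) \<Rightarrow> (nat \<Rightarrow> ('a \<Rightarrow> complex) \<Rightarrow> ('a \<Rightarrow> complex))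
   \<Rightarrow> complex \<Rightarrow> complex \<Rightarrow> nat \<Rightarrow> ('a \<Rightarrow> complex) \<Rightarrow> ('a \<Rightarrow> complex)" where
  "remainder_op \<phi> A z0 z N = (\<lambda>f w. \<phi> z f w - (\<Sum>n<N. (z - z0) ^ n * A n f w))"

definition op_power_series ::
  "real \<Rightarrow> 'a measure \<Rightarrow> (complex \<Rightarrow> ('a \<Rightarrow> complex) \<Rightarrow> ('a \<Rightarrow> complex))
   \<Rightarrow> (nat \<Rightarrow> ('a \<Rightarrow> complex) \<Rightarrow> ('a \<Rightarrow> complex)) \<Rightarrow> complex \<Rightarrow> real \<Rightarrow> bool" where
  "op_power_series p M \<phi> A z0 r \<longleftrightarrow>
     (\<forall>z\<in>ball z0 r. bounded_op p M (\<phi> z)) \<and> (\<forall>n. bounded_op p M (A n)) \<and>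
     (\<forall>z\<in>ball z0 r. (\<lambda>N. op_norm p M (remainder_op \<phi> A z0 z N)) \<longlonglongrightarrow> 0)"

lemma analytic_op_onD:
  assumes "analytic_op_on p M U \<phi>" "z0 \<in> U"
  shows "\<exists>r>0. \<exists>A. op_power_series p M \<phi> A z0 r"
proof -
  obtain r A where "r > 0" "ball z0 r \<subseteq> U" "\<forall>n. bounded_op p M (A n)"
    "\<forall>z\<in>ball z0 r. (\<lambda>N. op_norm p M (remainder_op \<phi> A z0 z N)) \<longlonglongrightarrow> 0"
    using assms unfolding analytic_op_on_def remainder_op_def by blast
  moreover have "\<forall>z\<in>U. bounded_op p M (\<phi> z)" using assms(1) by (simp add: analytic_op_on_def)
  ultimately show ?thesis unfolding op_power_series_def by blast
qed

lemma bounded_op_remainder: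
  assumes p: "p \<ge> 1" and "bounded_op p M (\<phi> z)" and "\<And>n. bounded_op p M (A n)"
  shows "bounded_op p M (remainder_op \<phi> A z0 z N)"
proof -
  have "bounded_op p M (\<lambda>f w. \<Sum>n<N. (z - z0) ^ n * A n f w)"
    using assms by (intro bounded_op_sum bounded_op_scale) auto
  then have "bounded_op p M (\<lambda>f w. \<phi> z f w + (-1) * (\<Sum>n<N. (z - z0) ^ n * A n f w))"
    using assms by (intro bounded_op_add bounded_op_scale) auto
  then show ?thesis by (simp add: remainder_op_def)
qed

text \<open>Cauchy estimate: $(r/2)^n\|A_n\|$ is bounded, because
  $(r/2)^nA_n$ is the difference of two remainders at $z_0+r/2$, and these remainders
  converge, hence are bounded, in operator norm.\<close>
lemma coeff_bound:
  assumes p: "p \<ge> 1" and r: "r > 0" and ps: "op_power_series p M \<phi> A z0 r"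
  shows "\<exists>B\<ge>0. \<forall>n. \<forall>f\<in>Lp_set p M. (r/2) ^ n * lp_norm p M (A n f) \<le> B * lp_norm p M f"
proof -
  define z1 where "z1 = z0 + complex_of_real (r/2)"
  have z1: "z1 \<in> ball z0 r" using r by (simp add: z1_def dist_norm)
  have bA: "bounded_op p M (A n)" for n using ps by (simp add: op_power_series_def)
  have bR: "bounded_op p M (remainder_op \<phi> A z0 z1 N)" for N
    using ps z1 p by (intro bounded_op_remainder) (auto simp: op_power_series_def)
  have "Bseq (\<lambda>N. op_norm p M (remainder_op \<phi> A z0 z1 N))"
    using ps z1 by (intro convergent_imp_Bseq convergentI) (auto simp: op_power_series_def)
  then obtain K where K: "K > 0" "\<And>N. op_norm p M (remainder_op \<phi> A z0 z1 N) \<le> K"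
    by (rule BseqE) (auto dest: abs_le_D1)
  have "(r/2) ^ n * lp_norm p M (A n f) \<le> (2 * K) * lp_norm p M f" if f: "f \<in> Lp_set p M" for n f
  proof -
    let ?R = "\<lambda>N. remainder_op \<phi> A z0 z1 N f"
    have R: "?R N \<in> Lp_set p M" "lp_norm p M (?R N) \<le> K * lp_norm p M f" for N
      using bounded_opD(1)[OF bR f] order_trans[OF op_norm_bound[OF _ bR f] mult_right_mono[OF K(2)]]
        p lp_norm_nonneg[of p M f] by auto
    have diff: "(\<lambda>w. complex_of_real ((r/2) ^ n) * A n f w) = (\<lambda>w. ?R n w - ?R (Suc n) w)"
      by (auto simp: remainder_op_def z1_def)
    have "(r/2) ^ n * lp_norm p M (A n f) = lp_norm p M (\<lambda>w. complex_of_real ((r/2) ^ n) * A n f w)"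
      using Lp_scale(2)[OF bounded_opD(1)[OF bA f]] r p by (simp add: norm_power)
    also have "\<dots> \<le> lp_norm p M (?R n) + lp_norm p M (?R (Suc n))"
      unfolding diff using R p by (intro Lp_diff(2))
    also have "\<dots> \<le> (2 * K) * lp_norm p M f" using R(2)[of n] R(2)[of "Suc n"] by simp
    finally show ?thesis .
  qed
  thus ?thesis using K by (intro exI[of _ "2 * K"]) auto
qed

text \<open>Wherever the power series applied to $x$ converges pointwise a.e., its sum is
  $\varphi(z)x$ a.e.: the remainders tend to $0$ in $L^p$.\<close>
lemma power_series_ae_sum:
  assumes p: "p \<ge> 1" and ps: "op_power_series p M \<phi> A z0 r" and z: "z \<in> ball z0 r"
    and x: "x \<in> Lp_set p M" and sm: "s \<in> borel_measurable M"
    and lim: "AE w in M. (\<lambda>N. \<Sum>n<N. (z - z0) ^ n * A n x w) \<longlonglongrightarrow> s w"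
  shows "AE w in M. \<phi> z x w = s w"
proof -
  have p0: "p > 0" using p by simp
  have b\<phi>: "bounded_op p M (\<phi> z)" and conv: "(\<lambda>N. op_norm p M (remainder_op \<phi> A z0 z N)) \<longlonglongrightarrow> 0"
    using ps z by (auto simp: op_power_series_def)
  have bR: "bounded_op p M (remainder_op \<phi> A z0 z N)" for N
    using ps z p by (intro bounded_op_remainder) (auto simp: op_power_series_def)
  have "AE w in M. \<phi> z x w - s w = 0"
  proof (rule Lp_limit_ae_zero[OF p0 bounded_opD(1)[OF bR x]])
    show "(\<lambda>N. lp_norm p M (remainder_op \<phi> A z0 z N x)) \<longlonglongrightarrow> 0"
    proof (rule tendsto_sandwich[where f = "\<lambda>_. 0"])
      show "\<forall>\<^sub>F N in sequentially. 0 \<le> lp_norm p M (remainder_op \<phi> A z0 z N x)"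
        by (simp add: lp_norm_nonneg)
      show "\<forall>\<^sub>F N in sequentially. lp_norm p M (remainder_op \<phi> A z0 z N x)
          \<le> op_norm p M (remainder_op \<phi> A z0 z N) * lp_norm p M x"
        by (intro always_eventually allI op_norm_bound[OF p0 bR x])
      show "(\<lambda>N. op_norm p M (remainder_op \<phi> A z0 z N) * lp_norm p M x) \<longlonglongrightarrow> 0"
        using tendsto_mult_left_zero[OF conv] by simp
    qed simp
    show "AE w in M. (\<lambda>N. remainder_op \<phi> A z0 z N x w) \<longlonglongrightarrow> \<phi> z x w - s w"
      using lim by eventually_elim (auto simp: remainder_op_def intro: tendsto_diff)
    show "(\<lambda>w. \<phi> z x w - s w) \<in> borel_measurable M"
      using bounded_opD(1)[OF b\<phi> x] sm unfolding Lp_set_def by (intro borel_measurable_diff) auto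
  qed
  thus ?thesis by auto
qed

text \<open>The majorant $\sum_n(r/4)^n|A_nx|$ of the power series is, by the Cauchy estimate,
  a series whose $n$-th term has $L^p$ norm at most $2^{-n}B\|x\|$; so it converges a.e.\
  to an $L^p$ function of norm at most $2B\|x\|$.\<close>
lemma power_series_majorant:
  assumes p: "p \<ge> 1" and r: "r > 0" and bA: "\<And>n. bounded_op p M (A n)" and B0: "B \<ge> 0"
    and B: "\<And>n f. f \<in> Lp_set p M \<Longrightarrow> (r/2) ^ n * lp_norm p M (A n f) \<le> B * lp_norm p M f"
    and x: "x \<in> Lp_set p M"
  obtains H where "H \<in> sets M" "AE w in M. w \<in> H"
    "\<And>w. w \<in> H \<Longrightarrow> summable (\<lambda>n. (r/4) ^ n * cmod (A n x w))"
    "(\<lambda>w. complex_of_real (indicator H w * (\<Sum>n. (r/4) ^ n * cmod (A n x w)))) \<in> Lp_set p M"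
    "lp_norm p M (\<lambda>w. complex_of_real (indicator H w * (\<Sum>n. (r/4) ^ n * cmod (A n x w))))
       \<le> 2 * B * lp_norm p M x"
proof -
  have p0: "p > 0" using p by simp
  define a where "a n w = (r/4) ^ n * cmod (A n x w)" for n w
  have Ax: "A n x \<in> Lp_set p M" for n by (rule bounded_opD(1)[OF bA x])
  have [measurable]: "A n x \<in> borel_measurable M" for n using Ax[of n] by (simp add: Lp_set_def)
  have am[measurable]: "a n \<in> borel_measurable M" for n unfolding a_def by measurable
  have summand: "(\<lambda>w. complex_of_real (a n w)) \<in> Lp_set p M"
    "lp_norm p M (\<lambda>w. complex_of_real (a n w)) \<le> (1/2) ^ n * (B * lp_norm p M x)" for n
  proof -
    have scaled: "(\<lambda>w. complex_of_real ((r/4) ^ n) * A n x w) \<in> Lp_set p M"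
      "lp_norm p M (\<lambda>w. complex_of_real ((r/4) ^ n) * A n x w) = (r/4) ^ n * lp_norm p M (A n x)"
      using Lp_scale[OF Ax p0, of "complex_of_real ((r/4) ^ n)"] r by (auto simp: norm_power)
    have dom: "AE w in M. cmod (complex_of_real (a n w)) \<le> cmod (complex_of_real ((r/4) ^ n) * A n x w)"
      using r by (simp add: a_def norm_mult norm_power)
    have am_c: "(\<lambda>w. complex_of_real (a n w)) \<in> borel_measurable M" by measurable
    show "(\<lambda>w. complex_of_real (a n w)) \<in> Lp_set p M" by (rule Lp_dominated(1)[OF scaled(1) am_c p0 dom])
    have quarter: "(r/4) ^ n = (1/2) ^ n * (r/2) ^ n" by (simp add: power_mult_distrib[symmetric])
    have "lp_norm p M (\<lambda>w. complex_of_real (a n w)) \<le> (r/4) ^ n * lp_norm p M (A n x)"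
      using Lp_dominated(2)[OF scaled(1) am_c p0 dom] scaled(2) by simp
    also have "\<dots> = (1/2) ^ n * ((r/2) ^ n * lp_norm p M (A n x))" unfolding quarter by simp
    also have "\<dots> \<le> (1/2) ^ n * (B * lp_norm p M x)" by (intro mult_left_mono B x) auto
    finally show "lp_norm p M (\<lambda>w. complex_of_real (a n w)) \<le> (1/2) ^ n * (B * lp_norm p M x)" .
  qed
  have "0 \<le> B * lp_norm p M x" using B0 lp_norm_nonneg[of p M x] by simp
  note geometric = Lp_geometric_partial_sums[where f = "\<lambda>n w. complex_of_real (a n w)" and q = "1/2",
      OF p _ _ summand this, simplified]
  have partial: "(\<lambda>w. complex_of_real (\<Sum>n<N. a n w)) \<in> Lp_set p M"
    "lp_norm p M (\<lambda>w. complex_of_real (\<Sum>n<N. a n w)) \<le> 2 * B * lp_norm p M x" for N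
    using geometric[of N] by (simp_all add: field_simps)
  have a0: "a n w \<ge> 0" for n w using r by (simp add: a_def)
  have C0: "0 \<le> 2 * B * lp_norm p M x" using B0 lp_norm_nonneg[of p M x] by simp
  obtain H where H: "H \<in> sets M" "AE w in M. w \<in> H" "\<And>w. w \<in> H \<Longrightarrow> summable (\<lambda>n. a n w)"
    "(\<lambda>w. complex_of_real (indicator H w * (\<Sum>n. a n w))) \<in> Lp_set p M"
    "lp_norm p M (\<lambda>w. complex_of_real (indicator H w * (\<Sum>n. a n w))) \<le> 2 * B * lp_norm p M x"
    using Lp_monotone_series[OF p0 am a0 partial C0] by blast
  show ?thesis by (rule that[OF H[unfolded a_def]])
qed

subsection \<open>Dominated jointly measurable versions\<close>

definition dominated_version ::
  "real \<Rightarrow> 'a measure \<Rightarrow> real set \<Rightarrow> (real \<Rightarrow> 'a \<Rightarrow> complex) \<Rightarrow> real \<Rightarrow> bool" where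
  "dominated_version p M I f b \<longleftrightarrow> (\<exists>F G.
     (\<lambda>(t, w). F t w) \<in> borel_measurable (lborel \<Otimes>\<^sub>M M) \<and> G \<in> Lp_set p M \<and> lp_norm p M G \<le> b \<and>
     (\<forall>t w. cmod (F t w) \<le> cmod (G w)) \<and> (\<forall>t\<in>I. AE w in M. F t w = f t w))"

lemma dominated_version_mono:
  assumes "dominated_version p M I f b" "I' \<subseteq> I" "\<And>t. t \<in> I' \<Longrightarrow> g t = f t" "b \<le> b'"
  shows "dominated_version p M I' g b'"
proof -
  obtain F G where "(\<lambda>(t, w). F t w) \<in> borel_measurable (lborel \<Otimes>\<^sub>M M)" "G \<in> Lp_set p M"
    "lp_norm p M G \<le> b" "\<forall>t w. cmod (F t w) \<le> cmod (G w)" "\<forall>t\<in>I. AE w in M. F t w = f t w"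
    using assms(1) unfolding dominated_version_def by blast
  then show ?thesis unfolding dominated_version_def using assms(2-4)
    by (intro exI[of _ F] exI[of _ G]) auto
qed

text \<open>Near $z_0$, the orbit $t\mapsto\varphi(z_0+c(t))x$ along a measurable path with
  $|c|\le r/4$ is the a.e.\ sum of the power series, which is dominated by the majorant.\<close>
lemma power_series_version:
  fixes c :: "real \<Rightarrow> complex"
  assumes p: "p \<ge> 1" and r: "r > 0" and ps: "op_power_series p M \<phi> A z0 r"
    and cm[measurable]: "c \<in> borel_measurable lborel" and cb: "\<And>t. cmod (c t) \<le> r/4"
    and x: "x \<in> Lp_set p M" and Hs: "H \<in> sets M" and AEH: "AE w in M. w \<in> H"
    and summ: "\<And>w. w \<in> H \<Longrightarrow> summable (\<lambda>n. (r/4) ^ n * cmod (A n x w))"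
    and G: "G \<in> Lp_set p M" "lp_norm p M G \<le> b"
    and Gdom: "\<And>w. indicator H w * (\<Sum>n. (r/4) ^ n * cmod (A n x w)) \<le> cmod (G w)"
  shows "dominated_version p M UNIV (\<lambda>t. \<phi> (z0 + c t) x) b"
proof -
  have Am[measurable]: "A n x \<in> borel_measurable M" for n
    using bounded_opD(1)[of p M "A n" x] ps x by (simp add: op_power_series_def Lp_set_def)
  have term_le: "norm (c t ^ n * A n x w) \<le> (r/4) ^ n * cmod (A n x w)" for t n w
    using cb[of t] by (auto simp: norm_mult norm_power intro!: mult_right_mono power_mono)
  have nsumm: "summable (\<lambda>n. norm (c t ^ n * A n x w))" if "w \<in> H" for t w
    by (rule summable_comparison_test'[OF summ[OF that]]) (use term_le in simp)
  define F where "F t w = complex_of_real (indicator H w) * (\<Sum>n. c t ^ n * A n x w)" for t w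
  have sum_lim: "(\<lambda>N. \<Sum>n<N. c t ^ n * A n x w) \<longlonglongrightarrow> (\<Sum>n. c t ^ n * A n x w)" if "w \<in> H" for t w
    using summable_norm_cancel[OF nsumm[OF that]] by (rule summable_LIMSEQ)
  have F_lim: "(\<lambda>N. complex_of_real (indicator H w) * (\<Sum>n<N. c t ^ n * A n x w)) \<longlonglongrightarrow> F t w" for t w
    unfolding F_def by (cases "w \<in> H") (simp_all add: sum_lim)
  have Fm: "(\<lambda>(t, w). F t w) \<in> borel_measurable (lborel \<Otimes>\<^sub>M M)"
  proof (rule borel_measurable_LIMSEQ_metric)
    show "(\<lambda>(t, w). complex_of_real (indicator H w) * (\<Sum>n<N. c t ^ n * A n x w)) \<in> borel_measurable (lborel \<Otimes>\<^sub>M M)" for N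
      using Hs by measurable
    show "(\<lambda>N. (\<lambda>(t, w). complex_of_real (indicator H w) * (\<Sum>n<N. c t ^ n * A n x w)) tw) \<longlonglongrightarrow> (\<lambda>(t, w). F t w) tw" for tw
      using F_lim[of "snd tw" "fst tw"] unfolding case_prod_beta .
  qed
  have Fdom: "cmod (F t w) \<le> cmod (G w)" for t w
  proof (cases "w \<in> H")
    case True
    have "cmod (F t w) \<le> (\<Sum>n. norm (c t ^ n * A n x w))"
      using True summable_norm[OF nsumm[OF True]] by (simp add: F_def)
    also have "\<dots> \<le> (\<Sum>n. (r/4) ^ n * cmod (A n x w))"
      by (intro suminf_le nsumm[OF True] summ[OF True] term_le)
    also have "\<dots> \<le> cmod (G w)" using Gdom[of w] True by simp
    finally show ?thesis .
  qed (simp add: F_def)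
  have ae_sum: "AE w in M. \<phi> (z0 + c t) x w = F t w" for t
  proof (rule power_series_ae_sum[OF p ps _ x])
    show "z0 + c t \<in> ball z0 r" using cb[of t] r by (simp add: dist_norm)
    show "F t \<in> borel_measurable M" using measurable_Pair2[OF Fm] by simp
    show "AE w in M. (\<lambda>N. \<Sum>n<N. (z0 + c t - z0) ^ n * A n x w) \<longlonglongrightarrow> F t w"
      using AEH by eventually_elim (simp add: sum_lim F_def)
  qed
  have "AE w in M. F t w = \<phi> (z0 + c t) x w" for t using ae_sum[of t] by eventually_elim (rule sym)
  then have "\<forall>t\<in>UNIV. AE w in M. F t w = \<phi> (z0 + c t) x w" by simp
  then show ?thesis unfolding dominated_version_def by (intro exI[of _ F] exI[of _ G] conjI allI Fm G Fdom)
qed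

lemma power_series_dominated:
  fixes c :: "real \<Rightarrow> complex"
  assumes p: "p \<ge> 1" and r: "r > 0" and ps: "op_power_series p M \<phi> A z0 r"
    and cm: "c \<in> borel_measurable lborel" and cb: "\<And>t. cmod (c t) \<le> r/4"
  shows "\<exists>K\<ge>0. \<forall>x\<in>Lp_set p M. dominated_version p M UNIV (\<lambda>t. \<phi> (z0 + c t) x) (K * lp_norm p M x)"
proof -
  obtain B where B0: "B \<ge> 0" and B: "\<And>n f. f \<in> Lp_set p M \<Longrightarrow> (r/2) ^ n * lp_norm p M (A n f) \<le> B * lp_norm p M f"
    using coeff_bound[OF p r ps] by blast
  have bA: "bounded_op p M (A n)" for n using ps by (simp add: op_power_series_def)
  have "dominated_version p M UNIV (\<lambda>t. \<phi> (z0 + c t) x) (2 * B * lp_norm p M x)" if x: "x \<in> Lp_set p M" for x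
  proof -
    obtain H where H: "H \<in> sets M" "AE w in M. w \<in> H"
      "\<And>w. w \<in> H \<Longrightarrow> summable (\<lambda>n. (r/4) ^ n * cmod (A n x w))"
      "(\<lambda>w. complex_of_real (indicator H w * (\<Sum>n. (r/4) ^ n * cmod (A n x w)))) \<in> Lp_set p M"
      "lp_norm p M (\<lambda>w. complex_of_real (indicator H w * (\<Sum>n. (r/4) ^ n * cmod (A n x w)))) \<le> 2 * B * lp_norm p M x"
      using power_series_majorant[OF p r bA B0 B x] by blast
    have Gdom: "indicator H w * (\<Sum>n. (r/4) ^ n * cmod (A n x w))
        \<le> cmod (complex_of_real (indicator H w * (\<Sum>n. (r/4) ^ n * cmod (A n x w))))" for w
      by (rule order_trans[OF abs_ge_self]) (simp only: norm_of_real order_refl)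
    show ?thesis by (rule power_series_version[OF p r ps cm cb x H Gdom])
  qed
  thus ?thesis using B0 by (intro exI[of _ "2 * B"]) auto
qed

lemma dominated_version_glue:
  assumes p: "p \<ge> 1" and J: "finite J" and I: "\<And>j. j \<in> J \<Longrightarrow> I j \<in> sets borel"
    and disj: "\<And>i j. i \<in> J \<Longrightarrow> j \<in> J \<Longrightarrow> i \<noteq> j \<Longrightarrow> I i \<inter> I j = {}"
    and dv: "\<And>j. j \<in> J \<Longrightarrow> dominated_version p M (I j) f (b j)"
  shows "dominated_version p M (\<Union>j\<in>J. I j) f (\<Sum>j\<in>J. b j)"
proof -
  have "\<forall>j\<in>J. \<exists>F G. (\<lambda>(t, w). F t w) \<in> borel_measurable (lborel \<Otimes>\<^sub>M M) \<and> G \<in> Lp_set p M \<and>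
      lp_norm p M G \<le> b j \<and> (\<forall>t w. cmod (F t w) \<le> cmod (G w)) \<and> (\<forall>t\<in>I j. AE w in M. F t w = f t w)"
    using dv unfolding dominated_version_def by blast
  from bchoice[OF this] obtain FF where "\<forall>j\<in>J. \<exists>G. (\<lambda>(t, w). FF j t w) \<in> borel_measurable (lborel \<Otimes>\<^sub>M M) \<and>
      G \<in> Lp_set p M \<and> lp_norm p M G \<le> b j \<and> (\<forall>t w. cmod (FF j t w) \<le> cmod (G w)) \<and>
      (\<forall>t\<in>I j. AE w in M. FF j t w = f t w)"
    by blast
  from bchoice[OF this] obtain GG where FG: "\<forall>j\<in>J. (\<lambda>(t, w). FF j t w) \<in> borel_measurable (lborel \<Otimes>\<^sub>M M) \<and>
      GG j \<in> Lp_set p M \<and> lp_norm p M (GG j) \<le> b j \<and> (\<forall>t w. cmod (FF j t w) \<le> cmod (GG j w)) \<and>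
      (\<forall>t\<in>I j. AE w in M. FF j t w = f t w)"
    by blast
  define F where "F t w = (\<Sum>j\<in>J. complex_of_real (indicator (I j) t) * FF j t w)" for t w
  define G where "G w = complex_of_real (\<Sum>j\<in>J. cmod (GG j w))" for w
  have GG: "\<And>j. j \<in> J \<Longrightarrow> GG j \<in> Lp_set p M" using FG by blast
  have "(\<Sum>j\<in>J. lp_norm p M (GG j)) \<le> (\<Sum>j\<in>J. b j)" using FG by (intro sum_mono) blast
  with Lp_sum_abs[where f = GG, OF J GG p]
  have G: "G \<in> Lp_set p M" "lp_norm p M G \<le> (\<Sum>j\<in>J. b j)" unfolding G_def[abs_def] by auto
  have Fdom: "cmod (F t w) \<le> cmod (G w)" for t w
  proof -
    have "cmod (F t w) \<le> (\<Sum>j\<in>J. cmod (complex_of_real (indicator (I j) t) * FF j t w))" unfolding F_def by (rule norm_sum)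
    also have "\<dots> \<le> (\<Sum>j\<in>J. cmod (GG j w))" using FG by (intro sum_mono) (auto simp: indicator_def)
    also have "\<dots> = cmod (G w)" by (simp add: G_def sum_nonneg del: of_real_sum)
    finally show ?thesis .
  qed
  have Fm: "(\<lambda>(t, w). F t w) \<in> borel_measurable (lborel \<Otimes>\<^sub>M M)"
  proof -
    have "(\<lambda>tw. \<Sum>j\<in>J. complex_of_real (indicator (I j) (fst tw)) * (\<lambda>(t, w). FF j t w) tw) \<in> borel_measurable (lborel \<Otimes>\<^sub>M M)"
    proof (rule borel_measurable_sum)
      fix j assume j: "j \<in> J"
      have [measurable]: "(\<lambda>(t, w). FF j t w) \<in> borel_measurable (lborel \<Otimes>\<^sub>M M)" "I j \<in> sets lborel"
        using FG I j by auto
      show "(\<lambda>tw. complex_of_real (indicator (I j) (fst tw)) * (\<lambda>(t, w). FF j t w) tw) \<in> borel_measurable (lborel \<Otimes>\<^sub>M M)"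
        by measurable
    qed
    thus ?thesis by (simp add: F_def case_prod_beta)
  qed
  have "AE w in M. F t w = f t w" if "j \<in> J" "t \<in> I j" for j t
  proof -
    have "F t w = FF j t w" for w
    proof -
      have "t \<notin> I i" if "i \<in> J - {j}" for i using disj[of i j] that \<open>j \<in> J\<close> \<open>t \<in> I j\<close> by auto
      then show ?thesis unfolding F_def using that J by (subst sum.remove[of J j]) auto
    qed
    then show ?thesis using FG that by auto
  qed
  then have "\<forall>t\<in>(\<Union>j\<in>J. I j). AE w in M. F t w = f t w" by blast
  then show ?thesis unfolding dominated_version_def by (intro exI[of _ F] exI[of _ G] conjI allI Fm G Fdom)
qed

subsection \<open>Covering the curve by finitely many discs\<close>

definition grid_interval :: "nat \<Rightarrow> nat \<Rightarrow> real set" where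
  "grid_interval k j = {real j / k ..< real (Suc j) / k}"

lemma grid_interval_partition:
  assumes k: "k > 0"
  shows "(\<Union>j<k. grid_interval k j) = {0..<1}"
    and "grid_interval k i \<inter> grid_interval k j \<noteq> {} \<Longrightarrow> i = j"
proof -
  have mem: "t \<in> grid_interval k j \<longleftrightarrow> real j \<le> t * k \<and> t * k < real j + 1" for t j
    using k by (auto simp: grid_interval_def field_simps)
  have index: "\<lfloor>t * k\<rfloor> = int j" if "t \<in> grid_interval k j" for t j
    using that mem by (intro floor_unique) auto
  show "(\<Union>j<k. grid_interval k j) = {0..<1}"
  proof (intro equalityI subsetI)
    fix t assume "t \<in> (\<Union>j<k. grid_interval k j)"
    then obtain j where "j < k" "real j \<le> t * k" "t * k < real j + 1" using mem by auto
    moreover have "real j + 1 \<le> real k" using \<open>j < k\<close> by (simp add: nat_less_real_le[symmetric])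
    ultimately have "0 \<le> t * k" "t * k < 1 * k" by linarith+
    then show "t \<in> {0..<1}" using k by (simp add: zero_le_mult_iff mult_less_cancel_right)
  next
    fix t :: real assume t: "t \<in> {0..<1}"
    have tk: "0 \<le> t * k" "t * k < k" using t k by (auto simp: mult_less_cancel_right2)
    have "real (nat \<lfloor>t * k\<rfloor>) \<le> t * k" "t * k < real (nat \<lfloor>t * k\<rfloor>) + 1" "nat \<lfloor>t * k\<rfloor> < k"
      using tk by linarith+
    then show "t \<in> (\<Union>j<k. grid_interval k j)" using mem by blast
  qed
  show "i = j" if meet: "grid_interval k i \<inter> grid_interval k j \<noteq> {}"
  proof -
    obtain t where "t \<in> grid_interval k i" "t \<in> grid_interval k j" using meet by blast
    from index[OF this(1)] index[OF this(2)] show "i = j" by simp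
  qed
qed

lemma grid_interval_subset:
  assumes "j < k"
  shows "grid_interval k j \<subseteq> {0..1}"
proof -
  have "grid_interval k j \<subseteq> (\<Union>i<k. grid_interval k i)" using assms by blast
  also have "\<dots> = {0..<1}" using assms by (intro grid_interval_partition(1)) simp
  finally show ?thesis by auto
qed

text \<open>Lebesgue number argument: for a continuous path and radii $R(t)>0$, a fine enough
  grid has each interval mapped into a disc $B(\gamma(T_j),R(T_j))$.\<close>
lemma curve_partition_subordinate:
  fixes \<gamma> :: "real \<Rightarrow> 'b::metric_space"
  assumes \<gamma>c: "continuous_on {0..1} \<gamma>" and R: "\<And>t. t \<in> {0..1} \<Longrightarrow> R t > 0"
  obtains k T where "k > 0" "\<And>j. j < k \<Longrightarrow> T j \<in> {0..1}"
    "\<And>j t. j < k \<Longrightarrow> t \<in> grid_interval k j \<Longrightarrow> dist (\<gamma> (T j)) (\<gamma> t) < R (T j)"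
proof -
  obtain \<epsilon> where \<epsilon>: "\<epsilon> > 0" "\<And>y. y \<in> \<gamma> ` {0..1} \<Longrightarrow> \<exists>G\<in>(\<lambda>t. ball (\<gamma> t) (R t)) ` {0..1}. ball y \<epsilon> \<subseteq> G"
    by (rule Heine_Borel_lemma[of "\<gamma> ` {0..1}" "(\<lambda>t. ball (\<gamma> t) (R t)) ` {0..1}"])
      (use R in \<open>auto intro: compact_continuous_image[OF \<gamma>c]\<close>)
  obtain \<delta> where \<delta>: "\<delta> > 0" "\<forall>t\<in>{0..1}. \<forall>s\<in>{0..1}. dist s t < \<delta> \<longrightarrow> dist (\<gamma> s) (\<gamma> t) < \<epsilon>"
    using compact_uniformly_continuous[OF \<gamma>c compact_Icc] \<epsilon>(1) unfolding uniformly_continuous_on_def by blast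
  obtain k :: nat where k: "k > 0" "inverse (real k) < \<delta>" using ex_inverse_of_nat_less[OF \<delta>(1)] by auto
  have "\<forall>j\<in>{..<k}. \<exists>t0. t0 \<in> {0..1} \<and> ball (\<gamma> (real j / k)) \<epsilon> \<subseteq> ball (\<gamma> t0) (R t0)"
  proof
    fix j assume "j \<in> {..<k}"
    then have "real j / k \<in> {0..1}" by (simp add: divide_le_eq_1)
    then show "\<exists>t0. t0 \<in> {0..1} \<and> ball (\<gamma> (real j / k)) \<epsilon> \<subseteq> ball (\<gamma> t0) (R t0)" using \<epsilon>(2) by blast
  qed
  from bchoice[OF this] obtain T
    where T: "\<forall>j\<in>{..<k}. T j \<in> {0..1} \<and> ball (\<gamma> (real j / k)) \<epsilon> \<subseteq> ball (\<gamma> (T j)) (R (T j))"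
    by blast
  show ?thesis
  proof (rule that[OF k(1)])
    show "T j \<in> {0..1}" if "j < k" for j using T that by simp
    fix j t assume j: "j < k" and t: "t \<in> grid_interval k j"
    have "dist t (real j / k) < \<delta>"
      using t k by (auto simp: grid_interval_def dist_real_def field_simps)
    then have "dist (\<gamma> t) (\<gamma> (real j / k)) < \<epsilon>"
      using \<delta>(2) grid_interval_subset[OF j] t j by (auto simp: divide_le_eq_1)
    moreover have "ball (\<gamma> (real j / k)) \<epsilon> \<subseteq> ball (\<gamma> (T j)) (R (T j))" using T j by simp
    ultimately show "dist (\<gamma> (T j)) (\<gamma> t) < R (T j)" by (auto simp: dist_commute)
  qed
qed

lemma dominated_version_on_curve:
  assumes p: "p \<ge> 1" and \<gamma>c: "continuous_on {0..1} \<gamma>" and \<gamma>U: "\<gamma> ` {0..1} \<subseteq> U"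
    and an: "analytic_op_on p M U \<phi>"
  shows "\<exists>C\<ge>0. \<forall>x\<in>Lp_set p M. dominated_version p M {0..<1} (\<lambda>t. \<phi> (\<gamma> t) x) (C * lp_norm p M x)"
proof -
  have "\<forall>t\<in>{0..1}. \<exists>r>0. \<exists>A. op_power_series p M \<phi> A (\<gamma> t) r"
    using analytic_op_onD[OF an] \<gamma>U by blast
  from bchoice[OF this] obtain R where "\<forall>t\<in>{0..1}. \<exists>A. R t > 0 \<and> op_power_series p M \<phi> A (\<gamma> t) (R t)"
    by blast
  from bchoice[OF this] obtain A where RA: "\<forall>t\<in>{0..1}. R t > 0 \<and> op_power_series p M \<phi> (A t) (\<gamma> t) (R t)"
    by blast
  obtain k T where k: "k > 0" and T: "\<And>j. j < k \<Longrightarrow> T j \<in> {0..1}"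
    and near: "\<And>j t. j < k \<Longrightarrow> t \<in> grid_interval k j \<Longrightarrow> dist (\<gamma> (T j)) (\<gamma> t) < R (T j) / 4"
    using curve_partition_subordinate[OF \<gamma>c, of "\<lambda>t. R t / 4"] RA by auto
  text \<open>On the $j$-th interval the path is $\gamma(T_j)+c_j(t)$ with $|c_j|\le R(T_j)/4$.\<close>
  define c where "c j t = indicator (grid_interval k j) t *\<^sub>R (\<gamma> t - \<gamma> (T j))" for j t
  have "\<exists>K\<ge>0. \<forall>x\<in>Lp_set p M. dominated_version p M UNIV (\<lambda>t. \<phi> (\<gamma> (T j) + c j t) x) (K * lp_norm p M x)"
    if j: "j < k" for j
  proof (rule power_series_dominated[OF p])
    from bspec[OF RA T[OF j]]
    show RT: "R (T j) > 0" "op_power_series p M \<phi> (A (T j)) (\<gamma> (T j)) (R (T j))" by auto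
    have "continuous_on (grid_interval k j) (\<lambda>t. \<gamma> t - \<gamma> (T j))"
      by (intro continuous_intros continuous_on_subset[OF \<gamma>c grid_interval_subset[OF j]])
    then show "c j \<in> borel_measurable lborel"
      unfolding c_def by (simp add: borel_measurable_continuous_on_indicator grid_interval_def)
    show "cmod (c j t) \<le> R (T j) / 4" for t
    proof (cases "t \<in> grid_interval k j")
      case True
      from near[OF j True] show ?thesis by (simp add: c_def True dist_norm norm_minus_commute)
    next
      case False
      with RT(1) show ?thesis by (simp add: c_def)
    qed
  qed
  then have "\<forall>j\<in>{..<k}. \<exists>K. K \<ge> 0 \<and>
      (\<forall>x\<in>Lp_set p M. dominated_version p M UNIV (\<lambda>t. \<phi> (\<gamma> (T j) + c j t) x) (K * lp_norm p M x))"
    by blast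
  from bchoice[OF this] obtain K where K: "\<forall>j\<in>{..<k}. K j \<ge> 0 \<and>
      (\<forall>x\<in>Lp_set p M. dominated_version p M UNIV (\<lambda>t. \<phi> (\<gamma> (T j) + c j t) x) (K j * lp_norm p M x))"
    by blast
  have "dominated_version p M {0..<1} (\<lambda>t. \<phi> (\<gamma> t) x) ((\<Sum>j<k. K j) * lp_norm p M x)"
    if x: "x \<in> Lp_set p M" for x
  proof -
    have "dominated_version p M (\<Union>j<k. grid_interval k j) (\<lambda>t. \<phi> (\<gamma> t) x) (\<Sum>j<k. K j * lp_norm p M x)"
    proof (rule dominated_version_glue[OF p])
      fix j assume j: "j \<in> {..<k}"
      then have "dominated_version p M UNIV (\<lambda>t. \<phi> (\<gamma> (T j) + c j t) x) (K j * lp_norm p M x)"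
        using K j x by simp
      then show "dominated_version p M (grid_interval k j) (\<lambda>t. \<phi> (\<gamma> t) x) (K j * lp_norm p M x)"
        by (rule dominated_version_mono) (auto simp: c_def)
      show "grid_interval k j \<in> sets borel" by (simp add: grid_interval_def)
    next
      fix i j :: nat assume "i \<noteq> j"
      then show "grid_interval k i \<inter> grid_interval k j = {}" using grid_interval_partition(2)[OF k, of i j] by blast
    qed simp
    then show ?thesis using grid_interval_partition(1)[OF k] by (simp add: sum_distrib_right)
  qed
  then show ?thesis using K by (intro exI[of _ "\<Sum>j<k. K j"]) (auto intro: sum_nonneg)
qed

subsection \<open>The square function\<close>

lemma C1_curve_speed:
  assumes "C1_curve \<gamma>"
  shows "continuous_on {0..1} \<gamma>"
    and "set_borel_measurable lborel {0..1} (\<lambda>t. norm (vector_derivative \<gamma> (at t within {0..1})))"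
    and "\<exists>V\<ge>0. \<forall>t\<in>{0..1}. norm (vector_derivative \<gamma> (at t within {0..1})) \<le> V"
proof -
  obtain D where Dd: "\<And>t. t \<in> {0..1} \<Longrightarrow> (\<gamma> has_vector_derivative D t) (at t within {0..1})"
    and Dc: "continuous_on {0..1} D"
    using assms unfolding C1_curve_def by blast
  have vd: "vector_derivative \<gamma> (at t within {0..1}) = D t" if "t \<in> {0..1}" for t
    by (rule vector_derivative_within_closed_interval[OF _ that Dd[OF that]]) simp
  show "continuous_on {0..1} \<gamma>"
    unfolding continuous_on_eq_continuous_within using Dd has_vector_derivative_continuous by blast
  have "(\<lambda>t. indicator {0..1} t *\<^sub>R norm (D t)) \<in> borel_measurable borel"
    using Dc by (intro borel_measurable_continuous_on_indicator continuous_intros) auto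
  moreover have "(\<lambda>t. indicator {0..1} t *\<^sub>R norm (vector_derivative \<gamma> (at t within {0..1})))
      = (\<lambda>t. indicator {0..1} t *\<^sub>R norm (D t))"
    by (auto simp: indicator_def vd)
  ultimately show "set_borel_measurable lborel {0..1} (\<lambda>t. norm (vector_derivative \<gamma> (at t within {0..1})))"
    unfolding set_borel_measurable_def by simp
  obtain V where "V > 0" "\<forall>y\<in>D ` {0..1}. norm y \<le> V"
    using compact_imp_bounded[OF compact_continuous_image[OF Dc compact_Icc]] unfolding bounded_pos by blast
  then show "\<exists>V\<ge>0. \<forall>t\<in>{0..1}. norm (vector_derivative \<gamma> (at t within {0..1})) \<le> V"
    by (intro exI[of _ V]) (auto simp: vd)
qed

lemma set_integral_square_bound:
  fixes f :: "real \<Rightarrow> complex" and v :: "real \<Rightarrow> real"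
  assumes fm[measurable]: "f \<in> borel_measurable lborel" and f_le: "\<And>t. cmod (f t) \<le> g"
    and A: "A \<in> sets lborel" "emeasure lborel A < \<infinity>"
    and vm: "set_borel_measurable lborel A v" and v: "\<And>t. t \<in> A \<Longrightarrow> 0 \<le> v t \<and> v t \<le> V" and V: "V \<ge> 0"
  shows "set_integrable lborel A (\<lambda>t. (cmod (f t))\<^sup>2 * v t)"
    and "0 \<le> (LINT t:A|lborel. (cmod (f t))\<^sup>2 * v t)"
    and "(LINT t:A|lborel. (cmod (f t))\<^sup>2 * v t) \<le> g\<^sup>2 * (V * measure lborel A)"
proof -
  have [measurable]: "(\<lambda>t. indicator A t *\<^sub>R v t) \<in> borel_measurable lborel"
    using vm by (simp add: set_borel_measurable_def)
  let ?h = "\<lambda>t. indicator A t *\<^sub>R ((cmod (f t))\<^sup>2 * v t)"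
  have h_eq: "?h t = (cmod (f t))\<^sup>2 * (indicator A t *\<^sub>R v t)" for t by simp
  have h_bound: "\<bar>?h t\<bar> \<le> g\<^sup>2 * V * indicator A t" for t
    using v[of t] f_le[of t] by (auto simp: indicator_def abs_mult intro!: mult_mono power_mono)
  have dom_int: "integrable lborel (\<lambda>t. g\<^sup>2 * V * indicator A t)"
    using A by (intro integrable_mult_right integrable_real_indicator)
  have h_int: "integrable lborel ?h"
  proof (rule Bochner_Integration.integrable_bound[OF dom_int])
    show "?h \<in> borel_measurable lborel" unfolding h_eq by measurable
    have "norm (?h t) \<le> norm (g\<^sup>2 * V * indicator A t)" for t
      using h_bound[of t] abs_ge_self[of "g\<^sup>2 * V * indicator A t"] unfolding real_norm_def by linarith
    then show "AE t in lborel. norm (?h t) \<le> norm (g\<^sup>2 * V * indicator A t)" by (intro AE_I2)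
  qed
  then show "set_integrable lborel A (\<lambda>t. (cmod (f t))\<^sup>2 * v t)" by (simp add: set_integrable_def)
  show "0 \<le> (LINT t:A|lborel. (cmod (f t))\<^sup>2 * v t)"
    unfolding set_lebesgue_integral_def h_eq using v by (intro integral_nonneg_AE AE_I2) (auto simp: indicator_def)
  have "(LINT t:A|lborel. (cmod (f t))\<^sup>2 * v t) \<le> integral\<^sup>L lborel (\<lambda>t. g\<^sup>2 * V * indicator A t)"
    unfolding set_lebesgue_integral_def using h_bound by (intro integral_mono[OF h_int dom_int]) (auto dest: abs_le_D1)
  then show "(LINT t:A|lborel. (cmod (f t))\<^sup>2 * v t) \<le> g\<^sup>2 * (V * measure lborel A)" by simp
qed

lemma square_integral_measurable:
  fixes F :: "real \<Rightarrow> 'a \<Rightarrow> complex" and v :: "real \<Rightarrow> real"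
  assumes Fm: "(\<lambda>(t, w). F t w) \<in> borel_measurable (lborel \<Otimes>\<^sub>M M)" and vm: "set_borel_measurable lborel A v"
  shows "(\<lambda>w. LINT t:A|lborel. (cmod (F t w))\<^sup>2 * v t) \<in> borel_measurable M"
proof -
  have [measurable]: "(\<lambda>t. indicator A t *\<^sub>R v t) \<in> borel_measurable lborel"
    using vm by (simp add: set_borel_measurable_def)
  have [measurable]: "(\<lambda>(w, t). F t w) \<in> borel_measurable (M \<Otimes>\<^sub>M lborel)"
    using measurable_pair_swap[OF Fm] by simp
  have h_eq: "indicator A t *\<^sub>R (c * v t) = c * (indicator A t *\<^sub>R v t)" for t and c :: real by simp
  have "(\<lambda>(w, t). indicator A t *\<^sub>R ((cmod (F t w))\<^sup>2 * v t)) \<in> borel_measurable (M \<Otimes>\<^sub>M lborel)"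
    unfolding h_eq by measurable
  from sigma_finite_measure.borel_measurable_lebesgue_integral[OF sigma_finite_lborel this]
  show ?thesis by (simp add: set_lebesgue_integral_def)
qed

text \<open>Square function estimate for a dominated family: with a bounded weight $v\le V$
  on a set $A$ of finite measure, $\big(\int_A|F(t,\cdot)|^2v\big)^{1/2}\le
  \sqrt{V|A|}\,|G|$ pointwise, hence in $L^p$.\<close>
lemma square_function_Lp:
  fixes F :: "real \<Rightarrow> 'a \<Rightarrow> complex" and v :: "real \<Rightarrow> real"
  assumes p: "p > 0" and Fm: "(\<lambda>(t, w). F t w) \<in> borel_measurable (lborel \<Otimes>\<^sub>M M)"
    and G: "G \<in> Lp_set p M" and dom: "\<And>t w. cmod (F t w) \<le> cmod (G w)"
    and A: "A \<in> sets lborel" "emeasure lborel A < \<infinity>"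
    and vm: "set_borel_measurable lborel A v" and v: "\<And>t. t \<in> A \<Longrightarrow> 0 \<le> v t \<and> v t \<le> V" and V: "V \<ge> 0"
  shows "\<And>w. w \<in> space M \<Longrightarrow> set_integrable lborel A (\<lambda>t. (cmod (F t w))\<^sup>2 * v t)"
    and "(\<lambda>w. complex_of_real (sqrt (LINT t:A|lborel. (cmod (F t w))\<^sup>2 * v t))) \<in> Lp_set p M"
    and "lp_norm p M (\<lambda>w. complex_of_real (sqrt (LINT t:A|lborel. (cmod (F t w))\<^sup>2 * v t)))
           \<le> sqrt (V * measure lborel A) * lp_norm p M G"
proof -
  have slice: "(\<lambda>t. F t w) \<in> borel_measurable lborel" if "w \<in> space M" for w
    using measurable_Pair1[OF Fm that] by simp
  note square = set_integral_square_bound[OF slice dom A vm v V]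
  show "\<And>w. w \<in> space M \<Longrightarrow> set_integrable lborel A (\<lambda>t. (cmod (F t w))\<^sup>2 * v t)" by (rule square(1))
  let ?S = "\<lambda>w. complex_of_real (sqrt (LINT t:A|lborel. (cmod (F t w))\<^sup>2 * v t))"
  have Sm: "?S \<in> borel_measurable M" using square_integral_measurable[OF Fm vm] by measurable
  let ?c = "complex_of_real (sqrt (V * measure lborel A))"
  have cG: "(\<lambda>w. ?c * G w) \<in> Lp_set p M" "lp_norm p M (\<lambda>w. ?c * G w) = sqrt (V * measure lborel A) * lp_norm p M G"
    using Lp_scale[OF G p, of ?c] V by auto
  have "AE w in M. cmod (?S w) \<le> cmod (?c * G w)"
  proof (rule AE_I2)
    fix w assume w: "w \<in> space M"
    have "sqrt (LINT t:A|lborel. (cmod (F t w))\<^sup>2 * v t) \<le> sqrt ((cmod (G w))\<^sup>2 * (V * measure lborel A))"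
      using square(3)[OF w] by simp
    then show "cmod (?S w) \<le> cmod (?c * G w)"
      using square(2)[OF w] V by (simp add: norm_mult real_sqrt_mult mult_ac)
  qed
  from Lp_dominated[OF cG(1) Sm p this] cG(2)
  show "?S \<in> Lp_set p M" "lp_norm p M ?S \<le> sqrt (V * measure lborel A) * lp_norm p M G" by auto
qed

lemma square_function_along_curve:
  fixes f :: "real \<Rightarrow> 'a \<Rightarrow> complex"
  assumes p: "p > 0" and \<gamma>: "C1_curve \<gamma>"
    and V: "V \<ge> 0" "\<forall>t\<in>{0..1}. norm (vector_derivative \<gamma> (at t within {0..1})) \<le> V"
    and dv: "dominated_version p M {0..<1} f b"
  shows "\<exists>F. (\<lambda>(t, w). F t w) \<in> borel_measurable (lborel \<Otimes>\<^sub>M M) \<and>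
           (AE t in lborel. t \<in> {0..1} \<longrightarrow> (AE w in M. F t w = f t w)) \<and>
           (AE w in M. set_integrable lborel {0..1}
              (\<lambda>t. (cmod (F t w))\<^sup>2 * norm (vector_derivative \<gamma> (at t within {0..1})))) \<and>
           (let S = (\<lambda>w. complex_of_real (sqrt (LINT t:{0..1}|lborel.
                       (cmod (F t w))\<^sup>2 * norm (vector_derivative \<gamma> (at t within {0..1})))))
            in S \<in> Lp_set p M \<and> lp_norm p M S \<le> sqrt V * b)"
proof -
  obtain F G where Fm: "(\<lambda>(t, w). F t w) \<in> borel_measurable (lborel \<Otimes>\<^sub>M M)"
    and G: "G \<in> Lp_set p M" "lp_norm p M G \<le> b"
    and dom: "\<And>t w. cmod (F t w) \<le> cmod (G w)"
    and eq: "\<And>t. t \<in> {0..<1} \<Longrightarrow> AE w in M. F t w = f t w"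
    using dv unfolding dominated_version_def by blast
  text \<open>The endpoint $t=1$ is a null set.\<close>
  have AE_eq: "AE t in lborel. t \<in> {0..1} \<longrightarrow> (AE w in M. F t w = f t w)"
    using AE_lborel_singleton[of 1] by eventually_elim (use eq in auto)
  have unit: "{0..1::real} \<in> sets lborel" "emeasure lborel {0..1::real} < \<infinity>" by auto
  have speed: "0 \<le> norm (vector_derivative \<gamma> (at t within {0..1})) \<and>
      norm (vector_derivative \<gamma> (at t within {0..1})) \<le> V" if "t \<in> {0..1}" for t
    using V(2) that by auto
  note square = square_function_Lp[OF p Fm G(1) dom unit C1_curve_speed(2)[OF \<gamma>] speed V(1)]
  have "AE w in M. set_integrable lborel {0..1}
      (\<lambda>t. (cmod (F t w))\<^sup>2 * norm (vector_derivative \<gamma> (at t within {0..1})))"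
    using square(1) by (intro AE_I2)
  moreover have "sqrt V * lp_norm p M G \<le> sqrt V * b" using G(2) V(1) by (intro mult_left_mono) auto
  ultimately show ?thesis
    using Fm AE_eq square(2,3) by (intro exI[of _ F]) (auto simp: Let_def)
qed

theorem lemma3p1:
  fixes M :: "'a measure" and p :: real and U :: "complex set"
    and \<gamma> :: "real \<Rightarrow> complex"
    and \<phi> :: "complex \<Rightarrow> ('a \<Rightarrow> complex) \<Rightarrow> ('a \<Rightarrow> complex)"
  assumes "1 < p"
    and "open U"
    and "C1_curve \<gamma>" and "\<gamma> ` {0..1} \<subseteq> U"
    and "analytic_op_on p M U \<phi>"
  shows "\<exists>C\<ge>0. \<forall>x\<in>Lp_set p M. \<exists>F :: real \<Rightarrow> 'a \<Rightarrow> complex.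
           (\<lambda>(t, w). F t w) \<in> borel_measurable (lborel \<Otimes>\<^sub>M M) \<and>
           (AE t in lborel. t \<in> {0..1} \<longrightarrow> (AE w in M. F t w = \<phi> (\<gamma> t) x w)) \<and>
           (AE w in M. set_integrable lborel {0..1}
              (\<lambda>t. (cmod (F t w))\<^sup>2 * norm (vector_derivative \<gamma> (at t within {0..1})))) \<and>
           (let S = (\<lambda>w. complex_of_real (sqrt (LINT t:{0..1}|lborel.
                       (cmod (F t w))\<^sup>2 * norm (vector_derivative \<gamma> (at t within {0..1})))))
            in S \<in> Lp_set p M \<and> lp_norm p M S \<le> C * lp_norm p M x)"
proof -
  have p: "p \<ge> 1" and p0: "p > 0" using assms(1) by simp_all
  obtain V where V: "V \<ge> 0" "\<forall>t\<in>{0..1}. norm (vector_derivative \<gamma> (at t within {0..1})) \<le> V"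
    using C1_curve_speed(3)[OF assms(3)] by blast
  obtain C where C: "C \<ge> 0" "\<forall>x\<in>Lp_set p M. dominated_version p M {0..<1} (\<lambda>t. \<phi> (\<gamma> t) x) (C * lp_norm p M x)"
    using dominated_version_on_curve[OF p C1_curve_speed(1)[OF assms(3)] assms(4,5)] by blast
  show ?thesis
  proof (intro exI[of _ "sqrt V * C"] conjI ballI)
    show "0 \<le> sqrt V * C" using V(1) C(1) by simp
    fix x assume "x \<in> Lp_set p M"
    from square_function_along_curve[OF p0 assms(3) V C(2)[rule_format, OF this]]
    show "\<exists>F. (\<lambda>(t, w). F t w) \<in> borel_measurable (lborel \<Otimes>\<^sub>M M) \<and>
           (AE t in lborel. t \<in> {0..1} \<longrightarrow> (AE w in M. F t w = \<phi> (\<gamma> t) x w)) \<and>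
           (AE w in M. set_integrable lborel {0..1}
              (\<lambda>t. (cmod (F t w))\<^sup>2 * norm (vector_derivative \<gamma> (at t within {0..1})))) \<and>
           (let S = (\<lambda>w. complex_of_real (sqrt (LINT t:{0..1}|lborel.
                       (cmod (F t w))\<^sup>2 * norm (vector_derivative \<gamma> (at t within {0..1})))))
            in S \<in> Lp_set p M \<and> lp_norm p M S \<le> sqrt V * C * lp_norm p M x)"
      by (simp add: mult.assoc)
  qed
qed

end
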